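(* Let $\lambda\in\Lambda$. If $W(\lambda)\neq\emptyset$, then $W(\lambda)=\widehat W$. Indeed, if $w_N\in W(\lambda)$ then $\underline L^*=\|w_N-w_0\|^2$ and $\widehat W=\{w\in W:H(w-w_N)=0\}=W(\lambda)$, where $H=2(I-\lambda\Delta)$. In particular, if $\lambda\in\Lambda^\circ$ and $w_N\in W(\lambda)$, then $w_N$ is the unique solution of the problem.
   Context: Regular dimension-reduced canonical form: let $q\ge1$, $\gamma_1>\dots>\gamma_q$ nonzero reals with $\gamma_1>0$, $\Gamma^*=\operatorname{diag}(\gamma_1,\dots,\gamma_q)$, $\delta=(\delta_1,\dots,\delta_q)^\top$ with all $\delta_i\ge0$, $k^*\in\mathbb{R}$, $\varepsilon\ge0$. Either ($m_0=0$) $\varepsilon=0$, the variable is $w=z\in\mathbb{R}^q$, $w_0=\delta$, $\Delta=\Gamma^*$, $d=0_q$; or ($m_0>0$) $\varepsilon>0$, $w=(y,z^\top)^\top\in\mathbb{R}^{q+1}$, $w_0=(0,\delta^\top)^\top$, $\Delta=\operatorname{diag}(0,\Gamma^* )$, $d=\varepsilon e_1$. The problem is to minimise $L^*(w)=\|w-w_0\|^2$ over $W=\{w:Q^*(w)=0\}$, $Q^*(w)=w^\top\Delta w+2d^\top w-k^*$, where $W\neq\emptyset$; $\underline L^*=\inf_WL^*$, $\widehat W=\{w\in W:L^*(w)=\underline L^*\}$. Normal equations: $(I-\lambda\Delta)w=w_0+\lambda d$. Admissible region: $\Lambda=(-\infty,\gamma_1^{-1}]$ if $\gamma_q>0$,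 $\Lambda=[\gamma_q^{-1},\gamma_1^{-1}]$ if $\gamma_q<0$; $\Lambda^\circ$ its interior. For $\lambda\in\Lambda$, $W_N(\lambda)$ is the set of solutions $w$ of the normal equations and $W(\lambda)=W\cap W_N(\lambda)$. *)

theory Defs
  imports "HOL-Analysis.Analysis"
begin

text \<open>Vectors of R^N are represented as functions nat => real vanishing at
indices >= N. Parameters gamma, delta are indexed 1..q as in the paper.
The case m0 = 0 corresponds to eps = 0 (N = q, coordinates z_1..z_q stored at
indices 0..q-1); the case m0 > 0 to eps > 0 (N = q+1, index 0 is y, index i is z_i).\<close>

definition dimN :: "nat \<Rightarrow> real \<Rightarrow> nat" where
  "dimN q eps = (if eps > 0 then q + 1 else q)"

definition vecs :: "nat \<Rightarrow> (nat \<Rightarrow> real) set" where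
  "vecs N = {w. \<forall>i\<ge>N. w i = 0}"

definition Dg :: "(nat \<Rightarrow> real) \<Rightarrow> real \<Rightarrow> nat \<Rightarrow> real" where
  "Dg gam eps i = (if eps > 0 then (if i = 0 then 0 else gam i) else gam (i + 1))"

definition w0v :: "nat \<Rightarrow> (nat \<Rightarrow> real) \<Rightarrow> real \<Rightarrow> nat \<Rightarrow> real" where
  "w0v q del eps i = (if i < dimN q eps then
      (if eps > 0 then (if i = 0 then 0 else del i) else del (i + 1)) else 0)"

definition dv :: "real \<Rightarrow> nat \<Rightarrow> real" where
  "dv eps i = (if eps > 0 \<and> i = 0 then eps else 0)"

definition Qstar :: "nat \<Rightarrow> (nat \<Rightarrow> real) \<Rightarrow> real \<Rightarrow> real \<Rightarrow> (nat \<Rightarrow> real) \<Rightarrow> real" where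
  "Qstar q gam eps k w = (\<Sum>i<dimN q eps. Dg gam eps i * (w i)\<^sup>2)
      + 2 * (\<Sum>i<dimN q eps. dv eps i * w i) - k"

definition Lstar :: "nat \<Rightarrow> (nat \<Rightarrow> real) \<Rightarrow> real \<Rightarrow> (nat \<Rightarrow> real) \<Rightarrow> real" where
  "Lstar q del eps w = (\<Sum>i<dimN q eps. (w i - w0v q del eps i)\<^sup>2)"

definition Wset :: "nat \<Rightarrow> (nat \<Rightarrow> real) \<Rightarrow> real \<Rightarrow> real \<Rightarrow> (nat \<Rightarrow> real) set" where
  "Wset q gam eps k = {w \<in> vecs (dimN q eps). Qstar q gam eps k w = 0}"

definition Lunder :: "nat \<Rightarrow> (nat \<Rightarrow> real) \<Rightarrow> (nat \<Rightarrow> real) \<Rightarrow> real \<Rightarrow> real \<Rightarrow> real" where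
  "Lunder q gam del eps k = (INF w\<in>Wset q gam eps k. Lstar q del eps w)"

definition What :: "nat \<Rightarrow> (nat \<Rightarrow> real) \<Rightarrow> (nat \<Rightarrow> real) \<Rightarrow> real \<Rightarrow> real \<Rightarrow> (nat \<Rightarrow> real) set" where
  "What q gam del eps k = {w \<in> Wset q gam eps k. Lstar q del eps w = Lunder q gam del eps k}"

definition Lam :: "nat \<Rightarrow> (nat \<Rightarrow> real) \<Rightarrow> real set" where
  "Lam q gam = (if gam q > 0 then {..1 / gam 1} else {1 / gam q .. 1 / gam 1})"

definition WN :: "nat \<Rightarrow> (nat \<Rightarrow> real) \<Rightarrow> (nat \<Rightarrow> real) \<Rightarrow> real \<Rightarrow> real \<Rightarrow> (nat \<Rightarrow> real) set" where
  "WN q gam del eps lam = {w \<in> vecs (dimN q eps). \<forall>i<dimN q eps.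
      (1 - lam * Dg gam eps i) * w i = w0v q del eps i + lam * dv eps i}"

definition Wlam :: "nat \<Rightarrow> (nat \<Rightarrow> real) \<Rightarrow> (nat \<Rightarrow> real) \<Rightarrow> real \<Rightarrow> real \<Rightarrow> real \<Rightarrow> (nat \<Rightarrow> real) set" where
  "Wlam q gam del eps k lam = Wset q gam eps k \<inter> WN q gam del eps lam"

definition Happ :: "nat \<Rightarrow> (nat \<Rightarrow> real) \<Rightarrow> real \<Rightarrow> real \<Rightarrow> (nat \<Rightarrow> real) \<Rightarrow> nat \<Rightarrow> real" where
  "Happ q gam eps lam v i = (if i < dimN q eps then 2 * (1 - lam * Dg gam eps i) * v i else 0)"

end

theory Submission
  imports Defs
begin

text \<open>For a solution \<open>wN\<close> of the normal equations lying on the constraint surface,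
  expanding \<open>L\<^sup>*(w) - L\<^sup>*(wN)\<close> with \<open>w0 = (I - \<lambda>\<Delta>) wN - \<lambda> d\<close> gives
  \<open>(w - wN)\<^sup>T (I - \<lambda>\<Delta>) (w - wN) + \<lambda> (Q\<^sup>*(w) - Q\<^sup>*(wN))\<close>; on \<open>W\<close> the last term
  vanishes. For \<open>\<lambda> \<in> \<Lambda>\<close> the diagonal matrix \<open>I - \<lambda>\<Delta>\<close> is positive semidefinite, so \<open>wN\<close>
  is a minimiser and the minimisers are exactly the points of \<open>W\<close> with
  \<open>(I - \<lambda>\<Delta>)(w - wN) = 0\<close>, i.e. the points of \<open>W(\<lambda>)\<close>. On the interior of \<open>\<Lambda>\<close> the
  matrix is positive definite and the minimiser is unique.\<close>

definition Hquad :: "nat \<Rightarrow> (nat \<Rightarrow> real) \<Rightarrow> real \<Rightarrow> real \<Rightarrow> (nat \<Rightarrow> real) \<Rightarrow> real" where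
  "Hquad q gam eps lam v = (\<Sum>i<dimN q eps. (1 - lam * Dg gam eps i) * (v i)\<^sup>2)"

lemma Lstar_eq_normal_solution_plus_Hquad:
  assumes wN: "wN \<in> WN q gam del eps lam"
    and Qw: "Qstar q gam eps k w = 0" and QwN: "Qstar q gam eps k wN = 0"
  shows "Lstar q del eps w = Lstar q del eps wN + Hquad q gam eps lam (\<lambda>i. w i - wN i)"
proof -
  let ?N = "dimN q eps"
  let ?q = "\<lambda>w i. Dg gam eps i * (w i)\<^sup>2 + 2 * (dv eps i * w i)"
  have pointwise: "(w i - w0v q del eps i)\<^sup>2 - (wN i - w0v q del eps i)\<^sup>2
      - (1 - lam * Dg gam eps i) * (w i - wN i)\<^sup>2 = lam * (?q w i - ?q wN i)"
    if "i < ?N" for i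
  proof -
    have w0: "w0v q del eps i = wN i - lam * (Dg gam eps i * wN i + dv eps i)"
      using wN that unfolding WN_def by (auto simp: algebra_simps)
    show ?thesis unfolding w0 by (simp add: power2_eq_square algebra_simps)
  qed
  have "Lstar q del eps w - Lstar q del eps wN - Hquad q gam eps lam (\<lambda>i. w i - wN i)
      = (\<Sum>i<?N. (w i - w0v q del eps i)\<^sup>2 - (wN i - w0v q del eps i)\<^sup>2
          - (1 - lam * Dg gam eps i) * (w i - wN i)\<^sup>2)"
    unfolding Lstar_def Hquad_def by (simp add: sum_subtractf)
  also have "\<dots> = (\<Sum>i<?N. lam * (?q w i - ?q wN i))"
    by (rule sum.cong) (auto simp: pointwise)
  also have "\<dots> = lam * ((\<Sum>i<?N. ?q w i) - (\<Sum>i<?N. ?q wN i))"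
    by (simp add: sum_distrib_left sum_subtractf right_diff_distrib)
  also have "\<dots> = lam * (Qstar q gam eps k w - Qstar q gam eps k wN)"
    unfolding Qstar_def by (simp add: sum.distrib sum_distrib_left[symmetric])
  finally show ?thesis using Qw QwN by simp
qed

lemma Dg_cases:
  assumes "i < dimN q eps"
  obtains "Dg gam eps i = 0" | j where "1 \<le> j" "j \<le> q" "Dg gam eps i = gam j"
proof (cases "eps > 0")
  case True
  then show ?thesis using assms that(1) that(2)[of i] unfolding Dg_def dimN_def
    by (cases "i = 0") auto
next
  case False
  then show ?thesis using assms that(2)[of "i + 1"] unfolding Dg_def dimN_def by auto
qed

lemma mult_le_max_of_between:
  fixes lam a b g :: real
  assumes "a \<le> g" "g \<le> b"
  shows "lam * g \<le> max (lam * a) (lam * b)"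
proof (cases "lam \<ge> 0")
  case True
  then have "lam * g \<le> lam * b" using assms(2) by (rule mult_left_mono[rotated])
  then show ?thesis by simp
next
  case False
  then have "lam * g \<le> lam * a" using assms(1) by (simp add: mult_left_mono_neg)
  then show ?thesis by simp
qed

text \<open>Only the extreme eigenvalues need to be controlled: every \<open>\<lambda>\<gamma>\<^sub>j\<close> lies between
  \<open>\<lambda>\<gamma>\<^sub>q\<close> and \<open>\<lambda>\<gamma>\<^sub>1\<close>.\<close>

lemma Lam_extreme_bounds:
  fixes gam :: "nat \<Rightarrow> real"
  assumes "gam 1 > 0" "gam q \<le> gam 1" "gam q \<noteq> 0" "lam \<in> Lam q gam"
  shows "lam * gam 1 \<le> 1" "lam * gam q \<le> 1"
proof -
  have "lam \<le> 1 / gam 1"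
    using assms(4) by (auto simp: Lam_def split: if_splits)
  then show g1: "lam * gam 1 \<le> 1"
    using assms(1) by (simp add: pos_le_divide_eq mult.commute)
  show "lam * gam q \<le> 1"
  proof (cases "gam q > 0")
    case True
    then have "lam * gam q \<le> max (lam * 0) (lam * gam 1)"
      using assms(2) by (intro mult_le_max_of_between) auto
    with g1 show ?thesis by simp
  next
    case False
    then have "gam q < 0" "1 / gam q \<le> lam"
      using assms(3,4) by (auto simp: Lam_def)
    then show ?thesis by (simp add: neg_divide_le_eq mult.commute)
  qed
qed

lemma interior_Lam_extreme_bounds:
  fixes gam :: "nat \<Rightarrow> real"
  assumes "gam 1 > 0" "gam q \<le> gam 1" "gam q \<noteq> 0" "lam \<in> interior (Lam q gam)"
  shows "lam * gam 1 < 1" "lam * gam q < 1"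
proof -
  have "lam < 1 / gam 1"
    using assms(4) by (auto simp: Lam_def split: if_splits)
  then show g1: "lam * gam 1 < 1"
    using assms(1) by (simp add: pos_less_divide_eq mult.commute)
  show "lam * gam q < 1"
  proof (cases "gam q > 0")
    case True
    then have "lam * gam q \<le> max (lam * 0) (lam * gam 1)"
      using assms(2) by (intro mult_le_max_of_between) auto
    with g1 show ?thesis by simp
  next
    case False
    then have "gam q < 0" "1 / gam q < lam"
      using assms(3,4) by (auto simp: Lam_def)
    then show ?thesis by (simp add: neg_divide_less_eq mult.commute)
  qed
qed

lemma Dg_mult_le_max:
  assumes "\<And>j. 1 \<le> j \<Longrightarrow> j \<le> q \<Longrightarrow> gam q \<le> gam j \<and> gam j \<le> gam 1"
    and "i < dimN q eps"
  shows "lam * Dg gam eps i \<le> max 0 (max (lam * gam q) (lam * gam 1))"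
  using assms(2)
proof (cases rule: Dg_cases[where gam = gam])
  case (2 j)
  then show ?thesis
    using mult_le_max_of_between[of "gam q" "gam j" "gam 1" lam] assms(1)[of j] by auto
qed simp

lemma gam_between_extremes:
  fixes gam :: "nat \<Rightarrow> real"
  assumes "\<And>i j. 1 \<le> i \<Longrightarrow> i < j \<Longrightarrow> j \<le> q \<Longrightarrow> gam i > gam j"
    and "1 \<le> j" "j \<le> q"
  shows "gam q \<le> gam j \<and> gam j \<le> gam 1"
  using assms(1)[of j q] assms(1)[of 1 j] assms(2,3) by (cases "j = q"; cases "j = 1") auto

lemma Hquad_nonneg:
  assumes "\<And>i. i < dimN q eps \<Longrightarrow> lam * Dg gam eps i \<le> 1"
  shows "0 \<le> Hquad q gam eps lam v"
  unfolding Hquad_def using assms by (intro sum_nonneg mult_nonneg_nonneg) auto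

lemma Hquad_eq_0_iff:
  assumes "\<And>i. i < dimN q eps \<Longrightarrow> lam * Dg gam eps i \<le> 1"
  shows "Hquad q gam eps lam v = 0 \<longleftrightarrow> (\<forall>i<dimN q eps. (1 - lam * Dg gam eps i) * v i = 0)"
proof -
  have "Hquad q gam eps lam v = 0
      \<longleftrightarrow> (\<forall>i\<in>{..<dimN q eps}. (1 - lam * Dg gam eps i) * (v i)\<^sup>2 = 0)"
    unfolding Hquad_def using assms by (intro sum_nonneg_eq_0_iff) auto
  then show ?thesis by (auto simp: power2_eq_square)
qed

lemma Happ_eq_0_iff:
  "Happ q gam eps lam v = (\<lambda>i. 0) \<longleftrightarrow> (\<forall>i<dimN q eps. (1 - lam * Dg gam eps i) * v i = 0)"
  unfolding Happ_def fun_eq_iff by auto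

lemma Wlam_eq_kernel:
  assumes "wN \<in> WN q gam del eps lam"
  shows "Wlam q gam del eps k lam
    = {w \<in> Wset q gam eps k. \<forall>i<dimN q eps. (1 - lam * Dg gam eps i) * (w i - wN i) = 0}"
proof -
  have "(1 - lam * Dg gam eps i) * w i = w0v q del eps i + lam * dv eps i
      \<longleftrightarrow> (1 - lam * Dg gam eps i) * (w i - wN i) = 0" if "i < dimN q eps" for i w
    using assms that unfolding WN_def by (auto simp: algebra_simps)
  then show ?thesis unfolding Wlam_def WN_def Wset_def by auto
qed

lemma eq_of_weighted_kernel:
  assumes "v \<in> vecs N" "w \<in> vecs N" "\<And>i. i < N \<Longrightarrow> c i \<noteq> 0"
    and "\<forall>i<N. c i * (w i - v i) = (0::real)"
  shows "w = v"
proof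
  fix i
  show "w i = v i"
    using assms by (cases "i < N") (auto simp: vecs_def)
qed

lemma minimisers_of_nonneg_excess:
  fixes f g :: "'a \<Rightarrow> real"
  assumes "x0 \<in> A" "\<And>x. x \<in> A \<Longrightarrow> f x = f x0 + g x" "\<And>x. x \<in> A \<Longrightarrow> 0 \<le> g x"
  shows "(INF x\<in>A. f x) = f x0" "{x \<in> A. f x = (INF x\<in>A. f x)} = {x \<in> A. g x = 0}"
proof -
  show inf: "(INF x\<in>A. f x) = f x0"
  proof (rule cInf_eq_minimum)
    show "f x0 \<in> f ` A" using assms(1) by (rule imageI)
    show "f x0 \<le> y" if "y \<in> f ` A" for y
      using that assms(2,3) by force
  qed
  show "{x \<in> A. f x = (INF x\<in>A. f x)} = {x \<in> A. g x = 0}"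
    unfolding inf using assms(2) by auto
qed

lemma minimisers_eq_Wlam:
  assumes "\<forall>i<dimN q eps. lam * Dg gam eps i \<le> 1"
    and wN: "wN \<in> Wlam q gam del eps k lam"
  shows "Lunder q gam del eps k = Lstar q del eps wN"
    and "What q gam del eps k
      = {w \<in> Wset q gam eps k. Happ q gam eps lam (\<lambda>i. w i - wN i) = (\<lambda>i. 0)}"
    and "What q gam del eps k = Wlam q gam del eps k lam"
proof -
  note weights = assms(1)[rule_format]
  have wNW: "wN \<in> Wset q gam eps k" and wNN: "wN \<in> WN q gam del eps lam"
    using wN by (auto simp: Wlam_def)
  have excess: "Lstar q del eps w = Lstar q del eps wN + Hquad q gam eps lam (\<lambda>i. w i - wN i)"
    if "w \<in> Wset q gam eps k" for w
    using that wNW by (intro Lstar_eq_normal_solution_plus_Hquad[OF wNN]) (auto simp: Wset_def)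
  note min = minimisers_of_nonneg_excess[where f = "Lstar q del eps"
      and g = "\<lambda>w. Hquad q gam eps lam (\<lambda>i. w i - wN i)", OF wNW excess Hquad_nonneg[OF weights]]
  show "Lunder q gam del eps k = Lstar q del eps wN"
    using min(1) by (simp add: Lunder_def)
  have What: "What q gam del eps k = {w \<in> Wset q gam eps k. Hquad q gam eps lam (\<lambda>i. w i - wN i) = 0}"
    using min(2) by (simp add: What_def Lunder_def)
  then show "What q gam del eps k
      = {w \<in> Wset q gam eps k. Happ q gam eps lam (\<lambda>i. w i - wN i) = (\<lambda>i. 0)}"
    by (simp add: Hquad_eq_0_iff[OF weights] Happ_eq_0_iff)
  show "What q gam del eps k = Wlam q gam del eps k lam"
    unfolding What Wlam_eq_kernel[OF wNN] by (simp add: Hquad_eq_0_iff[OF weights])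
qed

theorem lemma8p1:
  fixes q :: nat and gam del :: "nat \<Rightarrow> real" and k eps lam :: real
  assumes "q \<ge> 1"
    and "\<And>i j. 1 \<le> i \<Longrightarrow> i < j \<Longrightarrow> j \<le> q \<Longrightarrow> gam i > gam j"
    and "\<And>i. 1 \<le> i \<Longrightarrow> i \<le> q \<Longrightarrow> gam i \<noteq> 0"
    and "gam 1 > 0"
    and "\<And>i. 1 \<le> i \<Longrightarrow> i \<le> q \<Longrightarrow> del i \<ge> 0"
    and "eps \<ge> 0"
    and "Wset q gam eps k \<noteq> {}"
    and "lam \<in> Lam q gam"
  shows "(Wlam q gam del eps k lam \<noteq> {} \<longrightarrow> Wlam q gam del eps k lam = What q gam del eps k)
    \<and> (\<forall>wN \<in> Wlam q gam del eps k lam.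
          Lunder q gam del eps k = Lstar q del eps wN
        \<and> What q gam del eps k =
            {w \<in> Wset q gam eps k. Happ q gam eps lam (\<lambda>i. w i - wN i) = (\<lambda>i. 0)}
        \<and> What q gam del eps k = Wlam q gam del eps k lam)
    \<and> (lam \<in> interior (Lam q gam) \<longrightarrow>
        (\<forall>wN \<in> Wlam q gam del eps k lam. What q gam del eps k = {wN}))"
proof -
  have between: "gam q \<le> gam j \<and> gam j \<le> gam 1" if "1 \<le> j" "j \<le> q" for j
    using gam_between_extremes[where gam = gam, OF assms(2) that] .
  have gq: "gam q \<le> gam 1" "gam q \<noteq> 0"
    using between[of q] assms(1,3) by auto
  have weights: "\<forall>i<dimN q eps. lam * Dg gam eps i \<le> 1"
  proof (intro allI impI)
    fix i assume "i < dimN q eps"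
    then show "lam * Dg gam eps i \<le> 1"
      using Dg_mult_le_max[OF between, of i eps lam] Lam_extreme_bounds[OF assms(4) gq assms(8)]
      by simp
  qed
  note minimisers = minimisers_eq_Wlam[OF weights]
  have unique: "What q gam del eps k = {wN}"
    if int: "lam \<in> interior (Lam q gam)" and wN: "wN \<in> Wlam q gam del eps k lam" for wN
  proof -
    have strict: "lam * Dg gam eps i \<noteq> 1" if "i < dimN q eps" for i
      using Dg_mult_le_max[OF between that, of lam] interior_Lam_extreme_bounds[OF assms(4) gq int]
      by simp
    have "w = wN" if "w \<in> Wlam q gam del eps k lam" for w
      using that wN strict Wlam_eq_kernel[of wN q gam del eps lam k]
      by (intro eq_of_weighted_kernel[of wN "dimN q eps" w "\<lambda>i. 1 - lam * Dg gam eps i"])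
        (auto simp: Wlam_def Wset_def)
    then show ?thesis using minimisers(3)[OF wN] wN by blast
  qed
  show ?thesis using minimisers unique by blast
qed

end
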